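(* Let $f:\{-1,1\}^n\to\{-1,1\}$ be computable by a parity decision tree of depth $d$. Define $\sigma^2 = 4\Pr[f(x)=1]\Pr[f(x)=-1]$ (probabilities over uniformly random $x\in\{-1,1\}^n$) to be the variance of $f$. Then $$\sum_{i=1}^n \hat f(i) \le \sqrt{4\ln 2\,\sigma^2 d}.$$
   Context: Every $f:\{-1,1\}^n\to\{-1,1\}$ has a unique expansion $f(x)=\sum_{S\subseteq[n]}\hat f(S)\prod_{i\in S}x_i$, where $\hat f(S)=\mathbf{E}_x[f(x)\prod_{i\in S}x_i]$ over uniform $x$; $\hat f(i)$ denotes $\hat f(\{i\})$. A parity decision tree is a rooted full binary tree whose internal nodes are labelled by subsets $S\subseteq[n]$, whose two outgoing edges from each internal node are labelled $-1$ and $1$, and whose leaves are labelled by values in $\{-1,1\}$; an input $x$ follows from a node labelled $S$ the edge labelled $\prod_{i\in S}x_i$. The tree computes $f$ if every input $x$ reaches a leaf labelled $f(x)$. Its depth is the maximum number of internal nodes on a root-to-leaf path. *)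

theory Defs
  imports Complex_Main
begin

text \<open>Boolean cube {-1,1}^n, coordinates indexed by 0..n-1; points are functions
  nat => real which take values in {-1,1} on {0..<n} and are fixed to 1 outside.\<close>
definition cube :: "nat \<Rightarrow> (nat \<Rightarrow> real) set" where
  "cube n = {x. (\<forall>i<n. x i = -1 \<or> x i = 1) \<and> (\<forall>i\<ge>n. x i = 1)}"

definition cexp :: "nat \<Rightarrow> ((nat \<Rightarrow> real) \<Rightarrow> real) \<Rightarrow> real" where
  "cexp n g = (\<Sum>x\<in>cube n. g x) / real (card (cube n))"

definition cprob :: "nat \<Rightarrow> ((nat \<Rightarrow> real) \<Rightarrow> bool) \<Rightarrow> real" where
  "cprob n P = real (card {x\<in>cube n. P x}) / real (card (cube n))"

definition fourier :: "nat \<Rightarrow> ((nat \<Rightarrow> real) \<Rightarrow> real) \<Rightarrow> nat set \<Rightarrow> real" where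
  "fourier n f S = cexp n (\<lambda>x. f x * (\<Prod>i\<in>S. x i))"

datatype pdt = Leaf real | Node "nat set" pdt pdt

fun pdt_eval :: "pdt \<Rightarrow> (nat \<Rightarrow> real) \<Rightarrow> real" where
  "pdt_eval (Leaf b) x = b"
| "pdt_eval (Node S tn tp) x =
     (if (\<Prod>i\<in>S. x i) = -1 then pdt_eval tn x else pdt_eval tp x)"

fun pdt_depth :: "pdt \<Rightarrow> nat" where
  "pdt_depth (Leaf b) = 0"
| "pdt_depth (Node S tn tp) = Suc (max (pdt_depth tn) (pdt_depth tp))"

fun pdt_ok :: "nat \<Rightarrow> pdt \<Rightarrow> bool" where
  "pdt_ok n (Leaf b) = (b = -1 \<or> b = 1)"
| "pdt_ok n (Node S tn tp) = (S \<subseteq> {0..<n} \<and> pdt_ok n tn \<and> pdt_ok n tp)"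

definition pdt_computes :: "nat \<Rightarrow> pdt \<Rightarrow> ((nat \<Rightarrow> real) \<Rightarrow> real) \<Rightarrow> bool" where
  "pdt_computes n t f = (pdt_ok n t \<and> (\<forall>x\<in>cube n. pdt_eval t x = f x))"

end

theory Submission
  imports Defs
begin

text \<open>Write \<open>L x = \<Sum>\<^sub>i x\<^sub>i\<close>. Since \<open>E[L] = 0\<close>, the sum of the degree-one coefficients is
  \<open>E[f L] = E[(f - \<mu>) L]\<close> for the mean \<open>\<mu>\<close> of \<open>f\<close>. The leaves of the tree partition the cube into
  affine subspaces of codimension at most \<open>d\<close>, on each of which \<open>f\<close> is constant, so Cauchy--Schwarz
  leaf by leaf gives \<open>E[f L]\<^sup>2 \<le> \<sigma>\<^sup>2 \<Sum>\<^sub>\<ell> Pr[\<ell>] E[L | \<ell>]\<^sup>2\<close>. On an affine subspace of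
  codimension \<open>r\<close> the variance of \<open>L\<close> is at least \<open>n - 2r\<close>, hence
  \<open>\<Sum>\<^sub>\<ell> Pr[\<ell>] E[L | \<ell>]\<^sup>2 \<le> E[L\<^sup>2] - (n - 2d) = 2d\<close> and \<open>E[f L] \<le> \<surd>(2 \<sigma>\<^sup>2 d)\<close>,
  which is at most the claimed bound because \<open>2 \<le> 4 ln 2\<close>.\<close>

lemma sum_filter_split:
  "finite A \<Longrightarrow> sum g A = sum g {x\<in>A. P x} + sum g {x\<in>A. \<not> P x}"
  by (subst sum.union_disjoint[symmetric]) (auto intro: sum.cong)

lemma card_filter_split: "finite A \<Longrightarrow> card A = card {x\<in>A. P x} + card {x\<in>A. \<not> P x}"
  using sum_filter_split[of A "\<lambda>_. 1::nat" P] by simp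

lemma sum_list_map_filter_split:
  fixes ps :: "('a \<Rightarrow> real) list"
  shows "(\<Sum>\<psi>\<leftarrow>ps. \<psi> x) = (\<Sum>\<psi>\<leftarrow>filter P ps. \<psi> x) + (\<Sum>\<psi>\<leftarrow>filter (\<lambda>\<psi>. \<not> P \<psi>) ps. \<psi> x)"
  by (induction ps) auto

lemma sum_list_flip_sign:
  fixes ps :: "('a \<Rightarrow> real) list"
  assumes "\<And>\<psi>. \<psi> \<in> set ps \<Longrightarrow> \<psi> y = s \<psi> * \<psi> x" "\<And>\<psi>. \<psi> \<in> set ps \<Longrightarrow> s \<psi> = 1 \<or> s \<psi> = -1"
  shows "(\<Sum>\<psi>\<leftarrow>ps. \<psi> y) = (\<Sum>\<psi>\<leftarrow>filter (\<lambda>\<psi>. s \<psi> = 1) ps. \<psi> x) - (\<Sum>\<psi>\<leftarrow>filter (\<lambda>\<psi>. s \<psi> \<noteq> 1) ps. \<psi> x)"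
  using assms by (induction ps) force+

text \<open>\<open>scaled_var A h\<close> is \<open>|A|\<^sup>2\<close> times the variance of \<open>h\<close> under the uniform distribution on \<open>A\<close>.\<close>

definition scaled_var :: "'a set \<Rightarrow> ('a \<Rightarrow> real) \<Rightarrow> real" where
  "scaled_var A h = real (card A) * (\<Sum>x\<in>A. (h x)\<^sup>2) - (\<Sum>x\<in>A. h x)\<^sup>2"

lemma scaled_var_reindex:
  assumes "inj_on P A" "\<And>x. x \<in> A \<Longrightarrow> h x = h' (P x)"
  shows "scaled_var A h = scaled_var (P ` A) h'"
  using assms by (simp add: scaled_var_def sum.reindex card_image)

lemma scaled_var_doubling:
  assumes "finite B" "inj_on D B" "B \<inter> D ` B = {}"
    and "\<And>x. x \<in> B \<Longrightarrow> h x = u x + v x" "\<And>x. x \<in> B \<Longrightarrow> h (D x) = u x - v x"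
  shows "scaled_var (B \<union> D ` B) h = 4 * scaled_var B u + 4 * real (card B) * (\<Sum>x\<in>B. (v x)\<^sup>2)"
proof -
  have sum_doubling: "(\<Sum>x\<in>B \<union> D ` B. g x) = (\<Sum>x\<in>B. g x + g (D x))" for g :: "_ \<Rightarrow> real"
    using assms(1-3) by (simp add: sum.union_disjoint sum.reindex sum.distrib)
  have "card (B \<union> D ` B) = 2 * card B"
    using assms(1-3) by (simp add: card_Un_disjoint card_image)
  moreover have "(\<Sum>x\<in>B \<union> D ` B. (h x)\<^sup>2) = 2 * (\<Sum>x\<in>B. (u x)\<^sup>2) + 2 * (\<Sum>x\<in>B. (v x)\<^sup>2)"
    unfolding sum_doubling
    by (simp add: assms(4,5) power2_eq_square algebra_simps sum.distrib sum_distrib_left)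
  moreover have "(\<Sum>x\<in>B \<union> D ` B. h x) = 2 * (\<Sum>x\<in>B. u x)"
    unfolding sum_doubling by (simp add: assms(4,5) sum.distrib sum_distrib_left)
  ultimately show ?thesis by (simp add: scaled_var_def power2_eq_square algebra_simps)
qed

lemma sq_add_le_mult_add:
  fixes a b p q u v :: real
  assumes "a\<^sup>2 \<le> p * u" "b\<^sup>2 \<le> q * v" "0 \<le> p" "0 \<le> q" "0 \<le> u" "0 \<le> v"
  shows "(a + b)\<^sup>2 \<le> (p + q) * (u + v)"
proof -
  have "(a * b)\<^sup>2 \<le> (p * u) * (q * v)"
    unfolding power_mult_distrib by (rule mult_mono) (use assms in auto)
  also have "\<dots> \<le> ((p * v + q * u) / 2)\<^sup>2"
  proof -
    have "((p * v + q * u) / 2)\<^sup>2 - (p * u) * (q * v) = ((p * v - q * u) / 2)\<^sup>2"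
      by (simp add: power2_eq_square algebra_simps)
    then show ?thesis by (metis diff_ge_0_iff_ge zero_le_power2)
  qed
  finally have "\<bar>a * b\<bar> \<le> \<bar>(p * v + q * u) / 2\<bar>" using abs_le_square_iff by blast
  then have "a * b \<le> (p * v + q * u) / 2" using assms(3-6) by auto
  then show ?thesis using assms(1,2) by (simp add: power2_eq_square algebra_simps)
qed

lemma cube_coord: "x \<in> cube n \<Longrightarrow> x i = 1 \<or> x i = -1"
  by (cases "i < n") (auto simp: cube_def)

lemma cube_beyond: "x \<in> cube n \<Longrightarrow> n \<le> i \<Longrightarrow> x i = 1"
  by (simp add: cube_def)

lemma cube_0: "cube 0 = {\<lambda>_. 1}"
  by (auto simp: cube_def)

lemma cube_Suc_restrict: "x \<in> cube (Suc n) \<Longrightarrow> x(n := 1) \<in> cube n"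
  by (auto simp: cube_def)

lemma cube_Suc_extend: "x \<in> cube n \<Longrightarrow> c = 1 \<or> c = -1 \<Longrightarrow> x(n := c) \<in> cube (Suc n)"
  by (auto simp: cube_def)

lemma cube_Suc: "cube (Suc n) = cube n \<union> (\<lambda>x. x(n := -1)) ` cube n"
proof (intro equalityI subsetI)
  fix x assume x: "x \<in> cube (Suc n)"
  have x_eq: "x = (x(n := 1))(n := x n)" by simp
  show "x \<in> cube n \<union> (\<lambda>x. x(n := -1)) ` cube n"
  proof (cases "x n = 1")
    case True
    then have "x = x(n := 1)" by (metis fun_upd_triv)
    then show ?thesis using cube_Suc_restrict[OF x] by simp
  next
    case False
    then have "x = (x(n := 1))(n := -1)" using cube_coord[OF x, of n] by (metis fun_upd_triv fun_upd_upd)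
    then show ?thesis using cube_Suc_restrict[OF x] by blast
  qed
next
  fix x assume "x \<in> cube n \<union> (\<lambda>x. x(n := -1)) ` cube n"
  then consider "x \<in> cube n" | y where "y \<in> cube n" "x = y(n := -1)" by blast
  then show "x \<in> cube (Suc n)"
  proof cases
    case 1
    then have "x = x(n := 1)" using cube_beyond[of x n n] by (metis fun_upd_triv order_refl)
    then show ?thesis using cube_Suc_extend[OF 1, of 1] by simp
  qed (simp add: cube_Suc_extend)
qed

lemma finite_cube: "finite (cube n)"
  by (induction n) (auto simp: cube_0 cube_Suc)

lemma inj_on_fun_upd: "inj_on (\<lambda>x. x(n := c)) {x. x n = c'}"
proof (rule inj_onI)
  fix x y assume "x \<in> {x. x n = c'}" "y \<in> {x. x n = c'}" "x(n := c) = y(n := c)"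
  then have "(x(n := c))(n := c') = (y(n := c))(n := c')" "x n = c'" "y n = c'" by simp_all
  then show "x = y" by (simp add: fun_upd_idem)
qed

lemma cube_disjoint_lower: "cube n \<inter> (\<lambda>x. x(n := -1)) ` cube n = {}"
proof (rule equals0I)
  fix x assume "x \<in> cube n \<inter> (\<lambda>x. x(n := -1)) ` cube n"
  then have "x \<in> cube n" "x n = -1" by auto
  then show False using cube_beyond[of x n n] by simp
qed

lemma sum_cube_Suc:
  "(\<Sum>x\<in>cube (Suc n). g x) = (\<Sum>x\<in>cube n. g x) + (\<Sum>x\<in>cube n. g (x(n := -1)))"
proof -
  have inj: "inj_on (\<lambda>x. x(n := -1)) (cube n)"
    using inj_on_fun_upd[of n "-1" 1] by (rule inj_on_subset) (auto intro: cube_beyond)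
  have "(\<Sum>x\<in>cube (Suc n). g x) = (\<Sum>x\<in>cube n. g x) + (\<Sum>x\<in>(\<lambda>x. x(n := -1)) ` cube n. g x)"
    unfolding cube_Suc by (rule sum.union_disjoint) (simp_all add: finite_cube cube_disjoint_lower)
  also have "(\<Sum>x\<in>(\<lambda>x. x(n := -1)) ` cube n. g x) = (\<Sum>x\<in>cube n. g (x(n := -1)))"
    by (rule sum.reindex[OF inj, unfolded comp_def])
  finally show ?thesis .
qed

lemma card_cube: "card (cube n) = 2 ^ n"
proof (induction n)
  case (Suc n)
  then show ?case using sum_cube_Suc[of "\<lambda>_. 1::nat" n] by simp
qed (simp add: cube_0)

definition coord_sum :: "nat \<Rightarrow> (nat \<Rightarrow> real) \<Rightarrow> real" where
  "coord_sum n x = (\<Sum>i<n. x i)"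

lemma coord_sum_Suc: "coord_sum (Suc n) x = coord_sum n x + x n"
  by (simp add: coord_sum_def)

lemma coord_sum_upd: "coord_sum n (x(n := c)) = coord_sum n x"
  by (simp add: coord_sum_def)

lemma sum_coord_sum_cube: "(\<Sum>x\<in>cube n. coord_sum n x) = 0"
proof (induction n)
  case (Suc n)
  have "(\<Sum>x\<in>cube (Suc n). coord_sum (Suc n) x)
      = (\<Sum>x\<in>cube n. coord_sum n x + 1) + (\<Sum>x\<in>cube n. coord_sum n x - 1)"
    unfolding sum_cube_Suc
    by (intro arg_cong2[where f="(+)"] sum.cong) (simp_all add: coord_sum_Suc coord_sum_upd cube_beyond)
  with Suc show ?case by (simp add: sum.distrib sum_subtractf)
qed (simp add: coord_sum_def)

lemma sum_coord_sum_sq_cube: "(\<Sum>x\<in>cube n. (coord_sum n x)\<^sup>2) = real n * 2 ^ n"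
proof (induction n)
  case (Suc n)
  have "(\<Sum>x\<in>cube (Suc n). (coord_sum (Suc n) x)\<^sup>2)
      = (\<Sum>x\<in>cube n. (coord_sum n x + 1)\<^sup>2) + (\<Sum>x\<in>cube n. (coord_sum n x - 1)\<^sup>2)"
    unfolding sum_cube_Suc
    by (intro arg_cong2[where f="(+)"] sum.cong) (simp_all add: coord_sum_Suc coord_sum_upd cube_beyond)
  also have "\<dots> = (\<Sum>x\<in>cube n. 2 * (coord_sum n x)\<^sup>2 + 2)"
    by (simp add: sum.distrib[symmetric] power2_eq_square algebra_simps)
  also have "\<dots> = 2 * (\<Sum>x\<in>cube n. (coord_sum n x)\<^sup>2) + 2 * 2 ^ n"
    by (simp add: sum.distrib sum_distrib_left card_cube)
  finally show ?case using Suc by (simp add: algebra_simps)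
qed (simp add: coord_sum_def cube_0)

text \<open>A nonempty subset of the cube closed under pointwise triple products is a coset of a
  subgroup, i.e.\ an affine subspace of \<open>\<bbbF>\<^sub>2\<^sup>n\<close>; on it the functions with the
  \<open>affine_char\<close> property are exactly the restricted characters \<open>\<pm>\<chi>\<^sub>S\<close>.\<close>

definition mul3 :: "(nat \<Rightarrow> real) \<Rightarrow> (nat \<Rightarrow> real) \<Rightarrow> (nat \<Rightarrow> real) \<Rightarrow> nat \<Rightarrow> real" where
  "mul3 x y z = (\<lambda>i. x i * y i * z i)"

definition triple_closed :: "(nat \<Rightarrow> real) set \<Rightarrow> bool" where
  "triple_closed A \<longleftrightarrow> (\<forall>x\<in>A. \<forall>y\<in>A. \<forall>z\<in>A. mul3 x y z \<in> A)"

definition affine_char :: "(nat \<Rightarrow> real) set \<Rightarrow> ((nat \<Rightarrow> real) \<Rightarrow> real) \<Rightarrow> bool" where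
  "affine_char A \<psi> \<longleftrightarrow> (\<forall>x\<in>A. \<psi> x = 1 \<or> \<psi> x = -1) \<and>
     (\<forall>x\<in>A. \<forall>y\<in>A. \<forall>z\<in>A. \<psi> (mul3 x y z) = \<psi> x * \<psi> y * \<psi> z)"

lemma mul3_cube: "x \<in> cube n \<Longrightarrow> y \<in> cube n \<Longrightarrow> z \<in> cube n \<Longrightarrow> mul3 x y z \<in> cube n"
proof -
  assume cube: "x \<in> cube n" "y \<in> cube n" "z \<in> cube n"
  have "mul3 x y z i = 1 \<or> mul3 x y z i = -1" for i
    using cube_coord[OF cube(1), of i] cube_coord[OF cube(2), of i] cube_coord[OF cube(3), of i]
    by (auto simp: mul3_def)
  moreover have "mul3 x y z i = 1" if "n \<le> i" for i
    using cube_beyond[OF cube(1) that] cube_beyond[OF cube(2) that] cube_beyond[OF cube(3) that]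
    by (simp add: mul3_def)
  ultimately show ?thesis by (auto simp: cube_def)
qed

lemma triple_closed_cube: "triple_closed (cube n)"
  by (simp add: triple_closed_def mul3_cube)

lemma parity_mul3: "(\<Prod>i\<in>S. mul3 x y z i) = (\<Prod>i\<in>S. x i) * (\<Prod>i\<in>S. y i) * (\<Prod>i\<in>S. z i)"
  by (simp add: mul3_def prod.distrib)

lemma parity_cube: "x \<in> cube n \<Longrightarrow> (\<Prod>i\<in>S. x i) = 1 \<or> (\<Prod>i\<in>S. x i) = -1"
proof (induction S rule: infinite_finite_induct)
  case (insert i S)
  then show ?case using cube_coord[of x n i] by auto
qed simp_all

lemma triple_closed_parity_level:
  assumes "triple_closed A" "c = 1 \<or> c = -1"
  shows "triple_closed {x\<in>A. (\<Prod>i\<in>S. x i) = c}"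
  using assms unfolding triple_closed_def by (auto simp: parity_mul3)

lemma affine_char_coord: "A \<subseteq> cube m \<Longrightarrow> affine_char A (\<lambda>x. x i)"
  unfolding affine_char_def using cube_coord[of _ m i] by (auto simp: mul3_def)

lemma triple_closed_image:
  assumes "triple_closed A" "\<And>x y z. P (mul3 x y z) = mul3 (P x) (P y) (P z)"
  shows "triple_closed (P ` A)"
  using assms unfolding triple_closed_def by (auto simp flip: assms(2))

lemma affine_char_image:
  assumes "inj_on P A" "triple_closed A" "\<And>x y z. P (mul3 x y z) = mul3 (P x) (P y) (P z)"
    and "affine_char A \<psi>"
  shows "affine_char (P ` A) (\<psi> \<circ> inv_into A P)"
proof -
  have "inv_into A P (mul3 (P x) (P y) (P z)) = mul3 x y z" if "x \<in> A" "y \<in> A" "z \<in> A" for x y z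
    using assms(1-3) that unfolding triple_closed_def by (metis inv_into_f_f)
  then show ?thesis using assms(1,4) unfolding affine_char_def by auto
qed

lemma parity_level_card_le:
  assumes "A \<subseteq> cube n" "triple_closed A" "c = 1 \<or> c = -1" "c' = 1 \<or> c' = -1"
    and "{x\<in>A. (\<Prod>i\<in>S. x i) = c'} \<noteq> {}"
  shows "card {x\<in>A. (\<Prod>i\<in>S. x i) = c} \<le> card {x\<in>A. (\<Prod>i\<in>S. x i) = c'}"
proof (cases "{x\<in>A. (\<Prod>i\<in>S. x i) = c} = {}")
  case False
  obtain a where a: "a \<in> A" "(\<Prod>i\<in>S. a i) = c" using False by auto
  obtain b where b: "b \<in> A" "(\<Prod>i\<in>S. b i) = c'" using assms(5) by auto
  have nonzero: "a i \<noteq> 0" "b i \<noteq> 0" for i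
    using cube_coord[of a n i] cube_coord[of b n i] a b assms(1) by auto
  have "inj_on (\<lambda>y. mul3 y a b) {x\<in>A. (\<Prod>i\<in>S. x i) = c}"
    by (rule inj_onI) (simp add: mul3_def fun_eq_iff nonzero)
  moreover have "(\<lambda>y. mul3 y a b) ` {x\<in>A. (\<Prod>i\<in>S. x i) = c} \<subseteq> {x\<in>A. (\<Prod>i\<in>S. x i) = c'}"
    using assms(2-4) a b unfolding triple_closed_def by (auto simp: parity_mul3)
  moreover have "finite A" using assms(1) finite_cube finite_subset by blast
  ultimately show ?thesis by (intro card_inj_on_le) auto
next
  case True
  then show ?thesis by (simp only: card.empty)
qed

lemma parity_level_codim:
  assumes "A \<subseteq> cube n" "triple_closed A" "c = 1 \<or> c = -1" "2 ^ n \<le> card A * 2 ^ r"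
    and "{x\<in>A. (\<Prod>i\<in>S. x i) = c} \<noteq> {}"
  shows "2 ^ n \<le> card {x\<in>A. (\<Prod>i\<in>S. x i) = c} * 2 ^ Suc r"
proof -
  have "{x\<in>A. (\<Prod>i\<in>S. x i) \<noteq> c} = {x\<in>A. (\<Prod>i\<in>S. x i) = - c}"
    using assms(1,3) parity_cube[of _ n S] by force
  moreover have "finite A" using assms(1) finite_cube finite_subset by blast
  ultimately have "card A = card {x\<in>A. (\<Prod>i\<in>S. x i) = c} + card {x\<in>A. (\<Prod>i\<in>S. x i) = - c}"
    using card_filter_split[of A "\<lambda>x. (\<Prod>i\<in>S. x i) = c"] by simp
  moreover have "card {x\<in>A. (\<Prod>i\<in>S. x i) = - c} \<le> card {x\<in>A. (\<Prod>i\<in>S. x i) = c}"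
    using assms by (intro parity_level_card_le) auto
  ultimately have "card A * 2 ^ r \<le> card {x\<in>A. (\<Prod>i\<in>S. x i) = c} * 2 ^ Suc r" by simp
  then show ?thesis using assms(4) by linarith
qed

lemma flip_mul3:
  assumes "x \<in> cube m" "y \<in> cube m"
  shows "y(n := - y n) = mul3 y x (x(n := - x n))"
proof
  fix i show "(y(n := - y n)) i = mul3 y x (x(n := - x n)) i"
    using cube_coord[OF assms(1), of i] by (cases "i = n") (auto simp: mul3_def)
qed

lemma triple_closed_flip_all:
  assumes "A \<subseteq> cube m" "triple_closed A" "x \<in> A" "x(n := - x n) \<in> A" "y \<in> A"
  shows "y(n := - y n) \<in> A"
proof -
  have "y(n := - y n) = mul3 y x (x(n := - x n))" using assms(1,3,5) by (intro flip_mul3) auto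
  then show ?thesis using assms(2-5) unfolding triple_closed_def by simp
qed

lemma flip_closed_halves:
  assumes "A \<subseteq> cube (Suc n)" "\<forall>y\<in>A. y(n := - y n) \<in> A"
  defines "A0 \<equiv> {x\<in>A. x n = 1}"
  shows "A = A0 \<union> (\<lambda>x. x(n := -1)) ` A0" and "A0 \<inter> (\<lambda>x. x(n := -1)) ` A0 = {}"
    and "inj_on (\<lambda>x. x(n := -1)) A0" and "card A = 2 * card A0" and "A0 \<subseteq> cube n"
proof -
  show split: "A = A0 \<union> (\<lambda>x. x(n := -1)) ` A0"
  proof (intro equalityI subsetI)
    fix x assume x: "x \<in> A"
    show "x \<in> A0 \<union> (\<lambda>x. x(n := -1)) ` A0"
    proof (cases "x n = 1")
      case False
      then have "x n = -1" using cube_coord[of x "Suc n" n] assms(1) x by auto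
      then have "x(n := - x n) \<in> A0" "x = (x(n := - x n))(n := -1)"
        using assms(2) x by (auto simp: A0_def)
      then show ?thesis by blast
    qed (use x in \<open>simp add: A0_def\<close>)
  qed (use assms(2) in \<open>auto simp: A0_def\<close>)
  show disjoint: "A0 \<inter> (\<lambda>x. x(n := -1)) ` A0 = {}" by (auto simp: A0_def)
  show inj: "inj_on (\<lambda>x. x(n := -1)) A0"
    by (rule inj_on_subset[OF inj_on_fun_upd]) (auto simp: A0_def)
  have "finite A" using assms(1) finite_cube finite_subset by blast
  then have "finite A0" by (simp add: A0_def)
  then show "card A = 2 * card A0"
    using card_Un_disjoint[OF _ _ disjoint] card_image[OF inj] split by (metis finite_imageI mult_2)
  show "A0 \<subseteq> cube n"
    using cube_Suc_restrict assms(1) by (force simp: A0_def fun_upd_idem)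
qed

lemma affine_chars_lower_split:
  assumes "\<forall>\<psi>\<in>set ps. affine_char A \<psi>" "A \<subseteq> cube m"
    and "x0 \<in> A" "x0 n = 1" "x0(n := -1) \<in> A" "x \<in> A" "x n = 1"
  defines "sign \<psi> \<equiv> \<psi> x0 * \<psi> (x0(n := -1))"
  shows "(\<Sum>\<psi>\<leftarrow>ps. \<psi> (x(n := -1)))
    = (\<Sum>\<psi>\<leftarrow>filter (\<lambda>\<psi>. sign \<psi> = 1) ps. \<psi> x) - (\<Sum>\<psi>\<leftarrow>filter (\<lambda>\<psi>. sign \<psi> \<noteq> 1) ps. \<psi> x)"
proof (rule sum_list_flip_sign)
  fix \<psi> assume "\<psi> \<in> set ps"
  then have char: "affine_char A \<psi>" using assms(1) by blast
  have "x(n := -1) = mul3 x x0 (x0(n := -1))"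
    using flip_mul3[of x0 m x n] assms(2-7) by auto
  then have "\<psi> x0 = 1 \<or> \<psi> x0 = -1" "\<psi> (x0(n := -1)) = 1 \<or> \<psi> (x0(n := -1)) = -1"
    "\<psi> (x(n := -1)) = \<psi> x * \<psi> x0 * \<psi> (x0(n := -1))"
    using char assms(3,5,6) unfolding affine_char_def by auto
  then show "\<psi> (x(n := -1)) = sign \<psi> * \<psi> x" "sign \<psi> = 1 \<or> sign \<psi> = -1"
    unfolding sign_def by auto
qed

lemma inj_on_restrict_flip_free:
  assumes "A \<subseteq> cube (Suc n)" "\<forall>y\<in>A. y(n := - y n) \<notin> A"
  shows "inj_on (\<lambda>x. x(n := 1)) A"
proof (rule inj_onI)
  fix x y assume xy: "x \<in> A" "y \<in> A" "x(n := 1) = y(n := 1)"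
  have "y n = x n"
  proof (rule ccontr)
    assume "y n \<noteq> x n"
    moreover have "x \<in> cube (Suc n)" "y \<in> cube (Suc n)" using assms(1) xy(1,2) by auto
    ultimately have "y n = - x n" using cube_coord[of x "Suc n" n] cube_coord[of y "Suc n" n] by auto
    then have "y = x(n := - x n)" using xy(3) by (auto simp: fun_eq_iff) (metis fun_upd_other)
    then show False using assms(2) xy(1,2) by blast
  qed
  then show "x = y" using xy(3) by (auto simp: fun_eq_iff) (metis fun_upd_other)
qed

text \<open>The variance of the coordinate sum plus \<open>k\<close> affine characters on an affine subspace of
  codimension at most \<open>r\<close> (expressed as \<open>2\<^sup>n \<le> |A| 2\<^sup>r\<close>) is at least \<open>n - 2r - k\<close>. Eliminating the last coordinate either halves
  the subspace, splitting the characters into those that do and those that do not depend on it,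
  or turns that coordinate into one more character of the projected subspace at the cost of one
  unit of codimension.\<close>

definition coset_var_bound :: "nat \<Rightarrow> bool" where
  "coset_var_bound n \<longleftrightarrow> (\<forall>A r ps. A \<subseteq> cube n \<longrightarrow> A \<noteq> {} \<longrightarrow> triple_closed A \<longrightarrow>
     2 ^ n \<le> card A * 2 ^ r \<longrightarrow> (\<forall>\<psi>\<in>set ps. affine_char A \<psi>) \<longrightarrow>
     (real (card A))\<^sup>2 * (real n - 2 * real r - real (length ps))
       \<le> scaled_var A (\<lambda>x. coord_sum n x + (\<Sum>\<psi>\<leftarrow>ps. \<psi> x)))"

lemma coset_var_bound_0: "coset_var_bound 0"
  unfolding coset_var_bound_def
proof (intro allI impI)
  fix A r ps assume "A \<subseteq> cube 0" "A \<noteq> {}"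
  then have "A = {\<lambda>_. 1}" by (auto simp: cube_0)
  then show "(real (card A))\<^sup>2 * (real 0 - 2 * real r - real (length ps))
    \<le> scaled_var A (\<lambda>x. coord_sum 0 x + (\<Sum>\<psi>\<leftarrow>ps. \<psi> x))"
    by (simp add: scaled_var_def)
qed

lemma scaled_var_flip_closed:
  assumes "A \<subseteq> cube (Suc n)" "\<forall>y\<in>A. y(n := - y n) \<in> A" "\<forall>\<psi>\<in>set ps. affine_char A \<psi>"
    and "x0 \<in> A" "x0 n = 1"
  defines "A0 \<equiv> {x\<in>A. x n = 1}" and "sign \<psi> \<equiv> \<psi> x0 * \<psi> (x0(n := -1))"
  shows "scaled_var A (\<lambda>x. coord_sum (Suc n) x + (\<Sum>\<psi>\<leftarrow>ps. \<psi> x))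
    = 4 * scaled_var A0 (\<lambda>x. coord_sum n x + (\<Sum>\<psi>\<leftarrow>filter (\<lambda>\<psi>. sign \<psi> = 1) ps. \<psi> x))
      + 4 * real (card A0) * (\<Sum>x\<in>A0. (1 + (\<Sum>\<psi>\<leftarrow>filter (\<lambda>\<psi>. sign \<psi> \<noteq> 1) ps. \<psi> x))\<^sup>2)"
proof -
  note halves = flip_closed_halves[OF assms(1,2), folded A0_def]
  have "x0(n := -1) \<in> A" using assms(2,4,5) by force
  show ?thesis
    unfolding halves(1)
  proof (rule scaled_var_doubling[OF _ halves(3,2)])
    show "finite A0" using halves(5) finite_cube finite_subset by blast
    fix x assume "x \<in> A0"
    then have "x \<in> A" "x n = 1" by (simp_all add: A0_def)
    then show "coord_sum (Suc n) x + (\<Sum>\<psi>\<leftarrow>ps. \<psi> x)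
        = (coord_sum n x + (\<Sum>\<psi>\<leftarrow>filter (\<lambda>\<psi>. sign \<psi> = 1) ps. \<psi> x))
          + (1 + (\<Sum>\<psi>\<leftarrow>filter (\<lambda>\<psi>. sign \<psi> \<noteq> 1) ps. \<psi> x))"
      using sum_list_map_filter_split[where ps=ps and x=x and P="\<lambda>\<psi>. sign \<psi> = 1"]
      by (simp add: coord_sum_Suc)
    have "(\<Sum>\<psi>\<leftarrow>ps. \<psi> (x(n := -1)))
        = (\<Sum>\<psi>\<leftarrow>filter (\<lambda>\<psi>. sign \<psi> = 1) ps. \<psi> x) - (\<Sum>\<psi>\<leftarrow>filter (\<lambda>\<psi>. sign \<psi> \<noteq> 1) ps. \<psi> x)"
      unfolding sign_def
      by (rule affine_chars_lower_split[OF assms(3,1,4,5) \<open>x0(n := -1) \<in> A\<close> \<open>x \<in> A\<close> \<open>x n = 1\<close>])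
    then show "coord_sum (Suc n) (x(n := -1)) + (\<Sum>\<psi>\<leftarrow>ps. \<psi> (x(n := -1)))
        = (coord_sum n x + (\<Sum>\<psi>\<leftarrow>filter (\<lambda>\<psi>. sign \<psi> = 1) ps. \<psi> x))
          - (1 + (\<Sum>\<psi>\<leftarrow>filter (\<lambda>\<psi>. sign \<psi> \<noteq> 1) ps. \<psi> x))"
      by (simp add: coord_sum_Suc coord_sum_upd)
  qed
qed

lemma coset_var_bound_Suc_flip_closed:
  assumes IH: "coset_var_bound n"
    and A: "A \<subseteq> cube (Suc n)" "A \<noteq> {}" "triple_closed A" "2 ^ Suc n \<le> card A * 2 ^ r"
      "\<forall>\<psi>\<in>set ps. affine_char A \<psi>"
    and flip: "\<forall>y\<in>A. y(n := - y n) \<in> A"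
  shows "(real (card A))\<^sup>2 * (real (Suc n) - 2 * real r - real (length ps))
    \<le> scaled_var A (\<lambda>x. coord_sum (Suc n) x + (\<Sum>\<psi>\<leftarrow>ps. \<psi> x))"
proof -
  define A0 where "A0 = {x\<in>A. x n = 1}"
  note halves = flip_closed_halves[OF A(1) flip, folded A0_def]
  obtain x0 where x0: "x0 \<in> A0" using A(2) halves(1) by blast
  define sign where "sign \<psi> = \<psi> x0 * \<psi> (x0(n := -1))" for \<psi> :: "(nat \<Rightarrow> real) \<Rightarrow> real"
  define ps1 where "ps1 = filter (\<lambda>\<psi>. sign \<psi> = 1) ps"
  define ps2 where "ps2 = filter (\<lambda>\<psi>. sign \<psi> \<noteq> 1) ps"
  have len: "length ps1 + length ps2 = length ps"
    unfolding ps1_def ps2_def by (rule sum_length_filter_compl)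
  have "scaled_var A (\<lambda>x. coord_sum (Suc n) x + (\<Sum>\<psi>\<leftarrow>ps. \<psi> x))
      = 4 * scaled_var A0 (\<lambda>x. coord_sum n x + (\<Sum>\<psi>\<leftarrow>ps1. \<psi> x))
        + 4 * real (card A0) * (\<Sum>x\<in>A0. (1 + (\<Sum>\<psi>\<leftarrow>ps2. \<psi> x))\<^sup>2)"
    using x0 unfolding A0_def ps1_def ps2_def sign_def by (intro scaled_var_flip_closed A(1,5) flip) auto
  moreover have "(real (card A0))\<^sup>2 * (real n - 2 * real r - real (length ps1))
      \<le> scaled_var A0 (\<lambda>x. coord_sum n x + (\<Sum>\<psi>\<leftarrow>ps1. \<psi> x))"
  proof (rule IH[unfolded coset_var_bound_def, rule_format, OF halves(5)])
    show "A0 \<noteq> {}" using x0 by blast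
    show "triple_closed A0" using A(3) by (auto simp: triple_closed_def A0_def mul3_def)
    show "2 ^ n \<le> card A0 * 2 ^ r" using A(4) halves(4) by simp
    show "affine_char A0 \<psi>" if "\<psi> \<in> set ps1" for \<psi>
      using A(5) that by (auto simp: ps1_def affine_char_def A0_def)
  qed
  moreover have "(real (card A0))\<^sup>2 * (real (Suc n) - 2 * real r - real (length ps))
      \<le> (real (card A0))\<^sup>2 * (real n - 2 * real r - real (length ps1))
        + real (card A0) * (\<Sum>x\<in>A0. (1 + (\<Sum>\<psi>\<leftarrow>ps2. \<psi> x))\<^sup>2)"
  proof (cases "ps2 = []")
    case True
    then have "length ps1 = length ps" using len by simp
    with True show ?thesis by (simp add: power2_eq_square algebra_simps)
  next
    case False
    then have "length ps1 + 1 \<le> length ps" using len by (cases ps2) auto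
    then have "(real (card A0))\<^sup>2 * (real (Suc n) - 2 * real r - real (length ps))
        \<le> (real (card A0))\<^sup>2 * (real n - 2 * real r - real (length ps1))"
      by (intro mult_left_mono) auto
    moreover have "0 \<le> real (card A0) * (\<Sum>x\<in>A0. (1 + (\<Sum>\<psi>\<leftarrow>ps2. \<psi> x))\<^sup>2)"
      by (simp add: sum_nonneg)
    ultimately show ?thesis by linarith
  qed
  ultimately show ?thesis by (simp add: halves(4) power2_eq_square algebra_simps)
qed

lemma coset_var_bound_Suc_flip_free:
  assumes IH: "coset_var_bound n"
    and A: "A \<subseteq> cube (Suc n)" "A \<noteq> {}" "triple_closed A" "2 ^ Suc n \<le> card A * 2 ^ r"
      "\<forall>\<psi>\<in>set ps. affine_char A \<psi>"
    and no_flip: "\<forall>y\<in>A. y(n := - y n) \<notin> A"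
  shows "(real (card A))\<^sup>2 * (real (Suc n) - 2 * real r - real (length ps))
    \<le> scaled_var A (\<lambda>x. coord_sum (Suc n) x + (\<Sum>\<psi>\<leftarrow>ps. \<psi> x))"
proof -
  define P where "P = (\<lambda>x::nat \<Rightarrow> real. x(n := 1))"
  define Q where "Q = inv_into A P"
  define ps' where "ps' = ((\<lambda>x. x n) \<circ> Q) # map (\<lambda>\<psi>. \<psi> \<circ> Q) ps"
  have inj: "inj_on P A" unfolding P_def by (rule inj_on_restrict_flip_free[OF A(1) no_flip])
  have P_mul3: "P (mul3 x y z) = mul3 (P x) (P y) (P z)" for x y z
    by (auto simp: P_def mul3_def)
  have PA_cube: "P ` A \<subseteq> cube n" using A(1) cube_Suc_restrict by (auto simp: P_def)
  have card_PA: "card (P ` A) = card A" by (rule card_image[OF inj])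
  have "card A \<le> 2 ^ n" using card_mono[OF finite_cube PA_cube] card_PA card_cube by simp
  have "r \<noteq> 0"
  proof
    assume "r = 0"
    then have "2 ^ Suc n \<le> (2::nat) ^ n" using A(4) \<open>card A \<le> 2 ^ n\<close> by (simp only: power_0 mult_1_right)
    then show False by simp
  qed
  then obtain r' where r': "r = Suc r'" using not0_implies_Suc by blast
  have "scaled_var A (\<lambda>x. coord_sum (Suc n) x + (\<Sum>\<psi>\<leftarrow>ps. \<psi> x))
      = scaled_var (P ` A) (\<lambda>x. coord_sum n x + (\<Sum>\<psi>\<leftarrow>ps'. \<psi> x))"
  proof (rule scaled_var_reindex[OF inj])
    fix x assume "x \<in> A"
    then have "Q (P x) = x" unfolding Q_def using inj by (rule inv_into_f_f[rotated])
    moreover have "coord_sum n (P x) = coord_sum n x" by (simp add: P_def coord_sum_upd)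
    ultimately show "coord_sum (Suc n) x + (\<Sum>\<psi>\<leftarrow>ps. \<psi> x) = coord_sum n (P x) + (\<Sum>\<psi>\<leftarrow>ps'. \<psi> (P x))"
      by (simp add: ps'_def coord_sum_Suc comp_def)
  qed
  moreover have "(real (card (P ` A)))\<^sup>2 * (real n - 2 * real r' - real (length ps'))
      \<le> scaled_var (P ` A) (\<lambda>x. coord_sum n x + (\<Sum>\<psi>\<leftarrow>ps'. \<psi> x))"
  proof (rule IH[unfolded coset_var_bound_def, rule_format, OF PA_cube])
    show "P ` A \<noteq> {}" using A(2) by simp
    show "triple_closed (P ` A)" by (rule triple_closed_image[OF A(3) P_mul3])
    show "2 ^ n \<le> card (P ` A) * 2 ^ r'" using A(4) card_PA r' by simp
    show "affine_char (P ` A) \<psi>" if "\<psi> \<in> set ps'" for \<psi>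
      using that affine_char_image[OF inj A(3) P_mul3] A(5) affine_char_coord[OF A(1)]
      unfolding ps'_def Q_def by auto
  qed
  ultimately show ?thesis by (simp add: card_PA r' ps'_def algebra_simps)
qed

lemma coset_var_bound: "coset_var_bound n"
proof (induction n)
  case (Suc n)
  show ?case unfolding coset_var_bound_def
  proof (intro allI impI)
    fix A r ps assume A: "A \<subseteq> cube (Suc n)" "A \<noteq> {}" "triple_closed A"
      "2 ^ Suc n \<le> card A * 2 ^ r" "\<forall>\<psi>\<in>set ps. affine_char A \<psi>"
    show "(real (card A))\<^sup>2 * (real (Suc n) - 2 * real r - real (length ps))
      \<le> scaled_var A (\<lambda>x. coord_sum (Suc n) x + (\<Sum>\<psi>\<leftarrow>ps. \<psi> x))"
    proof (cases "\<forall>y\<in>A. y(n := - y n) \<in> A")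
      case True
      then show ?thesis by (rule coset_var_bound_Suc_flip_closed[OF Suc A])
    next
      case False
      then have "\<forall>y\<in>A. y(n := - y n) \<notin> A" using triple_closed_flip_all[OF A(1,3)] by blast
      then show ?thesis by (rule coset_var_bound_Suc_flip_free[OF Suc A])
    qed
  qed
qed (rule coset_var_bound_0)

lemma coset_coord_sum_sq_le:
  assumes "A \<subseteq> cube n" "A \<noteq> {}" "triple_closed A" "2 ^ n \<le> card A * 2 ^ r"
  shows "(\<Sum>x\<in>A. coord_sum n x)\<^sup>2 / real (card A)
    \<le> (\<Sum>x\<in>A. (coord_sum n x)\<^sup>2) - real (card A) * (real n - 2 * real r)"
proof -
  have "(real (card A))\<^sup>2 * (real n - 2 * real r) \<le> scaled_var A (coord_sum n)"
    using coset_var_bound[of n, unfolded coset_var_bound_def, rule_format, OF assms, of "[]"]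
    by simp
  moreover have "finite A" using assms(1) finite_cube finite_subset by blast
  then have "real (card A) > 0" using assms(2) by (simp add: card_gt_0_iff)
  ultimately show ?thesis
    by (simp only: pos_divide_le_eq) (simp add: scaled_var_def power2_eq_square algebra_simps)
qed

text \<open>Cauchy--Schwarz, applied leaf by leaf, bounds the correlation of a tree-computed function
  with the coordinate sum through this energy.\<close>

fun pdt_energy :: "nat \<Rightarrow> pdt \<Rightarrow> (nat \<Rightarrow> real) set \<Rightarrow> real" where
  "pdt_energy n (Leaf b) A = (\<Sum>x\<in>A. coord_sum n x)\<^sup>2 / real (card A)"
| "pdt_energy n (Node S tn tp) A =
     pdt_energy n tn {x\<in>A. (\<Prod>i\<in>S. x i) = -1} + pdt_energy n tp {x\<in>A. (\<Prod>i\<in>S. x i) \<noteq> -1}"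

lemma pdt_energy_nonneg: "0 \<le> pdt_energy n t A"
  by (induction t arbitrary: A) auto

lemma pdt_cauchy_schwarz:
  "finite A \<Longrightarrow> (\<Sum>x\<in>A. (pdt_eval t x - \<mu>) * coord_sum n x)\<^sup>2
     \<le> (\<Sum>x\<in>A. (pdt_eval t x - \<mu>)\<^sup>2) * pdt_energy n t A"
proof (induction t arbitrary: A)
  case (Leaf b)
  show ?case
  proof (cases "A = {}")
    case False
    then have "real (card A) > 0" using Leaf by auto
    have "(\<Sum>x\<in>A. (pdt_eval (Leaf b) x - \<mu>) * coord_sum n x)\<^sup>2 = (b - \<mu>)\<^sup>2 * (\<Sum>x\<in>A. coord_sum n x)\<^sup>2"
      by (simp add: sum_distrib_left[symmetric] power_mult_distrib)
    also have "\<dots> = (real (card A) * (b - \<mu>)\<^sup>2) * ((\<Sum>x\<in>A. coord_sum n x)\<^sup>2 / real (card A))"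
      using \<open>real (card A) > 0\<close> by simp
    finally show ?thesis by simp
  qed simp
next
  case (Node S tn tp)
  let ?P = "\<lambda>x. (\<Prod>i\<in>S. x i) = -1"
  have split: "(\<Sum>x\<in>A. g (pdt_eval (Node S tn tp) x) x)
      = (\<Sum>x\<in>{x\<in>A. ?P x}. g (pdt_eval tn x) x) + (\<Sum>x\<in>{x\<in>A. \<not> ?P x}. g (pdt_eval tp x) x)"
    for g :: "real \<Rightarrow> (nat \<Rightarrow> real) \<Rightarrow> real"
    by (subst sum_filter_split[OF Node.prems, of _ ?P]) (auto intro!: arg_cong2[where f="(+)"] sum.cong)
  show ?case
    unfolding split[of "\<lambda>y x. (y - \<mu>) * coord_sum n x"] split[of "\<lambda>y x. (y - \<mu>)\<^sup>2"] pdt_energy.simps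
    using Node.prems
    by (intro sq_add_le_mult_add Node.IH) (auto intro: sum_nonneg pdt_energy_nonneg)
qed

lemma pdt_energy_le:
  "A \<subseteq> cube n \<Longrightarrow> triple_closed A \<Longrightarrow> A = {} \<or> 2 ^ n \<le> card A * 2 ^ r \<Longrightarrow>
   pdt_energy n t A
     \<le> (\<Sum>x\<in>A. (coord_sum n x)\<^sup>2) - real (card A) * (real n - 2 * (real r + real (pdt_depth t)))"
proof (induction t arbitrary: A r)
  case (Leaf b)
  then show ?case using coset_coord_sum_sq_le[of A n r] by (cases "A = {}") auto
next
  case (Node S tn tp)
  define D where "D = real (pdt_depth (Node S tn tp))"
  define A1 where "A1 = {x\<in>A. (\<Prod>i\<in>S. x i) = -1}"
  define A2 where "A2 = {x\<in>A. (\<Prod>i\<in>S. x i) = 1}"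
  have A2_eq: "{x\<in>A. (\<Prod>i\<in>S. x i) \<noteq> -1} = A2"
    using parity_cube[of _ n S] Node.prems(1) by (force simp: A2_def)
  have "finite A" using Node.prems(1) finite_cube finite_subset by blast
  then have card_A: "card A = card A1 + card A2"
    using card_filter_split[of A "\<lambda>x. (\<Prod>i\<in>S. x i) = -1"] by (simp add: A1_def A2_eq)
  have codim: "A' = {} \<or> 2 ^ n \<le> card A' * 2 ^ Suc r" if "A' = {x\<in>A. (\<Prod>i\<in>S. x i) = c}"
    "c = 1 \<or> c = -1" for A' c
    using Node.prems parity_level_codim[of A n c r S] that by auto
  have mono: "real (card A') * (real n - 2 * (real r + D))
      \<le> real (card A') * (real n - 2 * (real (Suc r) + real (pdt_depth t')))"
    if "t' = tn \<or> t' = tp" for A' t'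
    using that by (intro mult_left_mono) (auto simp: D_def)
  have "pdt_energy n tn A1
      \<le> (\<Sum>x\<in>A1. (coord_sum n x)\<^sup>2) - real (card A1) * (real n - 2 * (real (Suc r) + real (pdt_depth tn)))"
    using Node.prems(1,2) codim[OF A1_def] unfolding A1_def
    by (intro Node.IH(1)) (auto simp: triple_closed_parity_level)
  then have energy_A1: "pdt_energy n tn A1 \<le> (\<Sum>x\<in>A1. (coord_sum n x)\<^sup>2) - real (card A1) * (real n - 2 * (real r + D))"
    using mono[of tn A1, OF disjI1[OF refl]] by linarith
  have "pdt_energy n tp A2
      \<le> (\<Sum>x\<in>A2. (coord_sum n x)\<^sup>2) - real (card A2) * (real n - 2 * (real (Suc r) + real (pdt_depth tp)))"
    using Node.prems(1,2) codim[OF A2_def] unfolding A2_def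
    by (intro Node.IH(2)) (auto simp: triple_closed_parity_level)
  then have energy_A2: "pdt_energy n tp A2 \<le> (\<Sum>x\<in>A2. (coord_sum n x)\<^sup>2) - real (card A2) * (real n - 2 * (real r + D))"
    using mono[of tp A2, OF disjI2[OF refl]] by linarith
  have "pdt_energy n (Node S tn tp) A = pdt_energy n tn A1 + pdt_energy n tp A2"
    by (simp add: A1_def A2_eq)
  moreover have "(\<Sum>x\<in>A. (coord_sum n x)\<^sup>2) = (\<Sum>x\<in>A1. (coord_sum n x)\<^sup>2) + (\<Sum>x\<in>A2. (coord_sum n x)\<^sup>2)"
    using sum_filter_split[OF \<open>finite A\<close>, of _ "\<lambda>x. (\<Prod>i\<in>S. x i) = -1"] by (simp add: A1_def A2_eq)
  moreover have "real (card A) * (real n - 2 * (real r + D))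
      = real (card A1) * (real n - 2 * (real r + D)) + real (card A2) * (real n - 2 * (real r + D))"
    using card_A by (simp add: algebra_simps)
  ultimately show ?case using energy_A1 energy_A2 unfolding D_def by linarith
qed

lemma pdt_coord_sum_correlation:
  assumes "pdt_computes n t f"
  shows "(\<Sum>x\<in>cube n. f x * coord_sum n x)\<^sup>2
    \<le> (\<Sum>x\<in>cube n. (f x - \<mu>)\<^sup>2) * (2 * real (pdt_depth t) * 2 ^ n)"
proof -
  have eval: "pdt_eval t x = f x" if "x \<in> cube n" for x
    using assms that by (simp add: pdt_computes_def)
  have "(\<Sum>x\<in>cube n. f x * coord_sum n x) = (\<Sum>x\<in>cube n. (pdt_eval t x - \<mu>) * coord_sum n x)"
    using sum_coord_sum_cube[of n]
    by (simp add: eval algebra_simps sum_subtractf sum_distrib_left[symmetric])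
  then have "(\<Sum>x\<in>cube n. f x * coord_sum n x)\<^sup>2
      \<le> (\<Sum>x\<in>cube n. (f x - \<mu>)\<^sup>2) * pdt_energy n t (cube n)"
    using pdt_cauchy_schwarz[where A="cube n" and t=t and \<mu>=\<mu> and n=n, OF finite_cube] by (simp add: eval)
  also have "\<dots> \<le> (\<Sum>x\<in>cube n. (f x - \<mu>)\<^sup>2) * (2 * real (pdt_depth t) * 2 ^ n)"
  proof (rule mult_left_mono)
    show "pdt_energy n t (cube n) \<le> 2 * real (pdt_depth t) * 2 ^ n"
      using pdt_energy_le[OF order_refl triple_closed_cube, of n 0 t]
      by (simp add: card_cube sum_coord_sum_sq_cube algebra_simps)
  qed (simp add: sum_nonneg)
  finally show ?thesis .
qed

lemma sum_sq_dev_sign: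
  assumes "finite A" "\<forall>x\<in>A. f x = 1 \<or> f x = -1"
  defines "p \<equiv> real (card {x\<in>A. f x = 1})" and "q \<equiv> real (card {x\<in>A. f x = -1})"
  shows "(\<Sum>x\<in>A. (f x - (p - q) / real (card A))\<^sup>2) = 4 * p * q / real (card A)"
proof -
  have levels: "{x\<in>A. \<not> f x = 1} = {x\<in>A. f x = -1}" using assms(2) by force
  have card_A: "p + q = real (card A)"
    using card_filter_split[OF assms(1), of "\<lambda>x. f x = 1"] unfolding levels p_def q_def by simp
  have sum_levels: "(\<Sum>x\<in>A. g (f x)) = p * g 1 + q * g (-1)" for g :: "real \<Rightarrow> real"
    using sum_filter_split[OF assms(1), of "\<lambda>x. g (f x)" "\<lambda>x. f x = 1"] unfolding levels p_def q_def
    by simp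
  have "(\<Sum>x\<in>A. (f x - (p - q) / real (card A))\<^sup>2)
      = p * (1 - (p - q) / (p + q))\<^sup>2 + q * (-1 - (p - q) / (p + q))\<^sup>2"
    unfolding card_A[symmetric] by (rule sum_levels)
  also have "\<dots> = 4 * p * q / (p + q)"
    by (cases "p + q = 0") (auto simp: field_simps power2_eq_square p_def q_def add_nonneg_eq_0_iff)
  finally show ?thesis unfolding card_A .
qed

lemma sum_fourier_singletons:
  "(\<Sum>i<n. fourier n f {i}) = (\<Sum>x\<in>cube n. f x * coord_sum n x) / 2 ^ n"
proof -
  have "(\<Sum>i<n. fourier n f {i}) = (\<Sum>i<n. \<Sum>x\<in>cube n. f x * x i) / 2 ^ n"
    by (simp add: fourier_def cexp_def card_cube sum_divide_distrib)
  also have "(\<Sum>i<n. \<Sum>x\<in>cube n. f x * x i) = (\<Sum>x\<in>cube n. f x * coord_sum n x)"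
    by (subst sum.swap) (simp add: coord_sum_def sum_distrib_left)
  finally show ?thesis .
qed

lemma ln_2_ge_half: "1 / 2 \<le> ln (2::real)"
proof -
  have "exp (1::real) \<le> 4" using exp_le by simp
  then have "1 \<le> ln (4::real)" by (simp add: ln_ge_iff)
  also have "ln (4::real) = 2 * ln 2" using ln_mult[of "2::real" 2] by simp
  finally show ?thesis by simp
qed

theorem theorem1:
  fixes n d :: nat and f :: "(nat \<Rightarrow> real) \<Rightarrow> real" and t :: pdt
  assumes "\<forall>x\<in>cube n. f x = -1 \<or> f x = 1"
    and "pdt_computes n t f" and "pdt_depth t = d"
  shows "(\<Sum>i<n. fourier n f {i})
     \<le> sqrt (4 * ln 2 * (4 * cprob n (\<lambda>x. f x = 1) * cprob n (\<lambda>x. f x = -1)) * real d)"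
proof -
  define N where "N = (2::real) ^ n"
  define p where "p = real (card {x\<in>cube n. f x = 1})"
  define q where "q = real (card {x\<in>cube n. f x = -1})"
  define S where "S = (\<Sum>x\<in>cube n. f x * coord_sum n x)"
  have signs: "\<forall>x\<in>cube n. f x = 1 \<or> f x = -1" using assms(1) by auto
  have "N > 0" by (simp add: N_def)
  have variance: "(\<Sum>x\<in>cube n. (f x - (p - q) / N)\<^sup>2) = 4 * p * q / N"
    using sum_sq_dev_sign[OF finite_cube signs] by (simp add: p_def q_def N_def card_cube)
  have "S\<^sup>2 \<le> 4 * p * q / N * (2 * real d * N)"
    using pdt_coord_sum_correlation[OF assms(2), of "(p - q) / N"]
    unfolding variance by (simp add: S_def N_def assms(3))
  then have "(S / N)\<^sup>2 \<le> 2 * real d * (4 * (p / N) * (q / N))"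
    using \<open>N > 0\<close> by (simp add: power_divide field_simps power2_eq_square)
  then have "S / N \<le> sqrt (2 * (4 * (p / N) * (q / N)) * real d)"
    by (intro real_le_rsqrt) (simp add: mult_ac)
  also have "\<dots> \<le> sqrt (4 * ln 2 * (4 * (p / N) * (q / N)) * real d)"
    using ln_2_ge_half \<open>N > 0\<close> by (intro real_sqrt_le_mono mult_right_mono) (auto simp: p_def q_def)
  finally show ?thesis
    by (simp add: sum_fourier_singletons cprob_def card_cube S_def N_def p_def q_def)
qed

end
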